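(* Let $(\mathcal{L},[\cdot,\cdot,\cdot]_{\mathcal{L}})$ be a (right) $3$-Leibniz algebra over a field $\mathbb{K}$ and $\overline{\mathcal{L}}=\mathbb{K}\oplus\mathcal{L}$. Then the linear map $R:(\overline{\mathcal{L}}\otimes\overline{\mathcal{L}})^{\otimes2}\to(\overline{\mathcal{L}}\otimes\overline{\mathcal{L}})^{\otimes 2}$ given by $R\big((a_1,x_1)\otimes(a_2,x_2)\otimes(b_1,y_1)\otimes(b_2,y_2)\big)=(b_1,y_1)\otimes(b_2,y_2)\otimes(a_1,x_1)\otimes(a_2,x_2)+(1,0)\otimes(1,0)\otimes\big((0,[x_1,y_1,y_2]_{\mathcal{L}})\otimes(a_2,x_2)+(a_1,x_1)\otimes(0,[x_2,y_1,y_2]_{\mathcal{L}})\big)$ is a solution of the Yang-Baxter equation on $V=\overline{\mathcal{L}}\otimes\overline{\mathcal{L}}$.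
   Context: A (right) $3$-Leibniz algebra is a vector space $\mathcal{L}$ with a trilinear map $[\cdot,\cdot,\cdot]_{\mathcal{L}}$ such that $[[x_1,x_2,x_3]_{\mathcal{L}},y_1,y_2]_{\mathcal{L}}=[[x_1,y_1,y_2]_{\mathcal{L}},x_2,x_3]_{\mathcal{L}}+[x_1,[x_2,y_1,y_2]_{\mathcal{L}},x_3]_{\mathcal{L}}+[x_1,x_2,[x_3,y_1,y_2]_{\mathcal{L}}]_{\mathcal{L}}$. A solution of the Yang-Baxter equation on a vector space $V$ is an invertible linear map $R:V\otimes V\to V\otimes V$ with $(R\otimes\mathrm{Id}_V)(\mathrm{Id}_V\otimes R)(R\otimes\mathrm{Id}_V)=(\mathrm{Id}_V\otimes R)(R\otimes\mathrm{Id}_V)(\mathrm{Id}_V\otimes R)$. *)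

theory Defs
  imports "HOL-Library.Poly_Mapping"
begin

text \<open>Vector spaces over a field 'k are modelled as free vector spaces
  'i =>0 'k (finitely supported functions on a basis index set 'i).\<close>

definition smult :: "'k::field \<Rightarrow> ('i \<Rightarrow>\<^sub>0 'k) \<Rightarrow> ('i \<Rightarrow>\<^sub>0 'k)" where
  "smult c u = Poly_Mapping.map (\<lambda>v. c * v) u"

definition klinear :: "(('i \<Rightarrow>\<^sub>0 'k::field) \<Rightarrow> ('j \<Rightarrow>\<^sub>0 'k)) \<Rightarrow> bool" where
  "klinear f \<longleftrightarrow> (\<forall>u v. f (u + v) = f u + f v) \<and> (\<forall>c u. f (smult c u) = smult c (f u))"

definition trilinear ::
  "(('b \<Rightarrow>\<^sub>0 'k::field) \<Rightarrow> ('b \<Rightarrow>\<^sub>0 'k) \<Rightarrow> ('b \<Rightarrow>\<^sub>0 'k) \<Rightarrow> ('b \<Rightarrow>\<^sub>0 'k)) \<Rightarrow> bool" where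
  "trilinear br \<longleftrightarrow>
     (\<forall>y z. klinear (\<lambda>x. br x y z)) \<and> (\<forall>x z. klinear (\<lambda>y. br x y z)) \<and>
     (\<forall>x y. klinear (\<lambda>z. br x y z))"

definition leibniz3 ::
  "(('b \<Rightarrow>\<^sub>0 'k::field) \<Rightarrow> ('b \<Rightarrow>\<^sub>0 'k) \<Rightarrow> ('b \<Rightarrow>\<^sub>0 'k) \<Rightarrow> ('b \<Rightarrow>\<^sub>0 'k)) \<Rightarrow> bool" where
  "leibniz3 br \<longleftrightarrow> trilinear br \<and>
     (\<forall>x1 x2 x3 y1 y2. br (br x1 x2 x3) y1 y2 =
        br (br x1 y1 y2) x2 x3 + br x1 (br x2 y1 y2) x3 + br x1 x2 (br x3 y1 y2))"

text \<open>\<open>\<overline>L = K \<oplus> L\<close> has basis indexed by 'b option: None \<mapsto> (1,0),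
  Some b \<mapsto> (0, e_b). Coordinates of an element (a,x) of \<open>\<overline>L\<close>:\<close>
fun coord :: "'k::field \<times> ('b \<Rightarrow>\<^sub>0 'k) \<Rightarrow> 'b option \<Rightarrow> 'k" where
  "coord (a, x) None = a"
| "coord (a, x) (Some b) = Poly_Mapping.lookup x b"

fun supp :: "'k::field \<times> ('b \<Rightarrow>\<^sub>0 'k) \<Rightarrow> 'b option set" where
  "supp (a, x) = insert None (Some ` Poly_Mapping.keys x)"

text \<open>V = \<open>\<overline>L \<otimes> \<overline>L\<close> has basis indexed by 'b option \<times> 'b option;
  V \<otimes> V by pairs of those.\<close>
definition t4 :: "'k::field \<times> ('b \<Rightarrow>\<^sub>0 'k) \<Rightarrow> 'k \<times> ('b \<Rightarrow>\<^sub>0 'k) \<Rightarrow>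
    'k \<times> ('b \<Rightarrow>\<^sub>0 'k) \<Rightarrow> 'k \<times> ('b \<Rightarrow>\<^sub>0 'k) \<Rightarrow>
    (('b option \<times> 'b option) \<times> ('b option \<times> 'b option)) \<Rightarrow>\<^sub>0 'k" where
  "t4 u1 u2 u3 u4 =
     (\<Sum>i1\<in>supp u1. \<Sum>i2\<in>supp u2. \<Sum>i3\<in>supp u3. \<Sum>i4\<in>supp u4.
        Poly_Mapping.single ((i1, i2), (i3, i4))
          (coord u1 i1 * coord u2 i2 * coord u3 i3 * coord u4 i4))"

definition tensor_f_id :: "(('v \<times> 'v \<Rightarrow>\<^sub>0 'k::field) \<Rightarrow> ('v \<times> 'v \<Rightarrow>\<^sub>0 'k)) \<Rightarrow>
    ('v \<times> 'v \<times> 'v \<Rightarrow>\<^sub>0 'k) \<Rightarrow> ('v \<times> 'v \<times> 'v \<Rightarrow>\<^sub>0 'k)" where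
  "tensor_f_id f t =
     (\<Sum>(p, q, r)\<in>Poly_Mapping.keys t. smult (Poly_Mapping.lookup t (p, q, r))
        (let s = f (Poly_Mapping.single (p, q) 1) in
         \<Sum>(p', q')\<in>Poly_Mapping.keys s. Poly_Mapping.single (p', q', r) (Poly_Mapping.lookup s (p', q'))))"

definition tensor_id_f :: "(('v \<times> 'v \<Rightarrow>\<^sub>0 'k::field) \<Rightarrow> ('v \<times> 'v \<Rightarrow>\<^sub>0 'k)) \<Rightarrow>
    ('v \<times> 'v \<times> 'v \<Rightarrow>\<^sub>0 'k) \<Rightarrow> ('v \<times> 'v \<times> 'v \<Rightarrow>\<^sub>0 'k)" where
  "tensor_id_f f t =
     (\<Sum>(p, q, r)\<in>Poly_Mapping.keys t. smult (Poly_Mapping.lookup t (p, q, r))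
        (let s = f (Poly_Mapping.single (q, r) 1) in
         \<Sum>(q', r')\<in>Poly_Mapping.keys s. Poly_Mapping.single (p, q', r') (Poly_Mapping.lookup s (q', r'))))"

definition yang_baxter :: "(('v \<times> 'v \<Rightarrow>\<^sub>0 'k::field) \<Rightarrow> ('v \<times> 'v \<Rightarrow>\<^sub>0 'k)) \<Rightarrow> bool" where
  "yang_baxter R \<longleftrightarrow> klinear R \<and> bij R \<and>
     tensor_f_id R \<circ> tensor_id_f R \<circ> tensor_f_id R =
     tensor_id_f R \<circ> tensor_f_id R \<circ> tensor_id_f R"

end

theory Submission
  imports Defs HOL.Modules
begin

(* Write R = \<tau> + N with \<tau> the flip of V \<otimes> V and put 1 = (1,0) \<otimes> (1,0). By the defining
   formula N takes values in 1 \<otimes> V and vanishes on V \<otimes> 1, since brackets with a zero argument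
   vanish; hence N \<tau> N = 0 and Y \<mapsto> \<tau> (Y - N (\<tau> Y)) is inverse to R.

   For the braid relation write R (A \<otimes> B) = B \<otimes> A + 1 \<otimes> A\<cdot>B, where B = (b1,y1) \<otimes> (b2,y2)
   acts on A through the derivation [-, y1, y2] of L. Applied to A \<otimes> B \<otimes> C both sides contain
   C \<otimes> B \<otimes> A + 1 \<otimes> B\<cdot>C \<otimes> A + 1 \<otimes> B \<otimes> A\<cdot>C + C \<otimes> 1 \<otimes> A\<cdot>B; what remains is
   1 \<otimes> 1 \<otimes> (A\<cdot>B)\<cdot>C on the left and 1 \<otimes> 1 \<otimes> ((A\<cdot>C)\<cdot>B + A\<cdot>(B\<cdot>C)) on the right, which
   agree by the 3-Leibniz identity. Both sides are additive and every basis vector of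
   V \<otimes> V \<otimes> V is a pure tensor of elements of K \<oplus> L, so this check suffices. *)

lemma lookup_smult [simp]: "Poly_Mapping.lookup (smult c u) k = c * Poly_Mapping.lookup u k"
  by (simp add: smult_def map.rep_eq when_def)

lemma smult_add_left: "smult (a + b) u = smult a u + smult b u"
  by (rule poly_mapping_eqI) (simp add: lookup_add distrib_right)

lemma smult_zero [simp]: "smult 0 u = 0"
  by (rule poly_mapping_eqI) simp

lemma smult_single: "smult c (Poly_Mapping.single k d) = Poly_Mapping.single k (c * d)"
  by (rule poly_mapping_eqI) (simp add: lookup_single when_def)

lemma klinear_additive: "klinear f \<Longrightarrow> additive f"
  by unfold_locales (simp add: klinear_def)

lemma klinear_single:
  "klinear f \<Longrightarrow> f (Poly_Mapping.single k (c * d)) = smult c (f (Poly_Mapping.single k d))"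
  by (metis klinear_def smult_single)

lemma additive_poly_mapping_eqI:
  fixes g h :: "('a \<Rightarrow>\<^sub>0 'b::ab_group_add) \<Rightarrow> 'c::ab_group_add"
  assumes "additive g" "additive h"
    and single: "\<And>k c. g (Poly_Mapping.single k c) = h (Poly_Mapping.single k c)"
  shows "g u = h u"
proof (induction u rule: Poly_Mapping.update_induct)
  case const
  show ?case using additive.zero[OF assms(1)] additive.zero[OF assms(2)] by simp
next
  case (update u k c)
  then have "Poly_Mapping.update k c u = u + Poly_Mapping.single k c"
    by (intro poly_mapping_eqI) (auto simp: lookup_update lookup_add lookup_single in_keys_iff)
  with update.IH show ?case
    by (simp add: additive.add[OF assms(1)] additive.add[OF assms(2)] single)
qed

lemma biadditive_poly_mapping_eqI:
  fixes g h :: "('a \<Rightarrow>\<^sub>0 'b::ab_group_add) \<Rightarrow> ('c \<Rightarrow>\<^sub>0 'd::ab_group_add) \<Rightarrow> 'e::ab_group_add"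
  assumes "\<And>v. additive (\<lambda>u. g u v)" "\<And>u. additive (g u)"
    and "\<And>v. additive (\<lambda>u. h u v)" "\<And>u. additive (h u)"
    and single: "\<And>k c l d. g (Poly_Mapping.single k c) (Poly_Mapping.single l d) =
                             h (Poly_Mapping.single k c) (Poly_Mapping.single l d)"
  shows "g u v = h u v"
proof (rule additive_poly_mapping_eqI[where g = "\<lambda>u. g u v"])
  fix k c
  show "g (Poly_Mapping.single k c) v = h (Poly_Mapping.single k c) v"
    by (rule additive_poly_mapping_eqI) (use assms in auto)
qed (use assms in auto)

lemma bij_additive_perturbation:
  fixes \<sigma> N :: "'a::ab_group_add \<Rightarrow> 'a"
  assumes \<sigma>: "additive \<sigma>" "\<And>x. \<sigma> (\<sigma> x) = x"
    and N: "additive N" "\<And>x. N (\<sigma> (N x)) = 0"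
  shows "bij (\<lambda>x. \<sigma> x + N x)"
proof (rule o_bij)
  show "(\<lambda>y. \<sigma> (y - N (\<sigma> y))) \<circ> (\<lambda>x. \<sigma> x + N x) = id"
    by (rule ext) (simp add: \<sigma> N additive.add[OF \<sigma>(1)] additive.add[OF N(1)] additive.diff[OF \<sigma>(1)])
  show "(\<lambda>x. \<sigma> x + N x) \<circ> (\<lambda>y. \<sigma> (y - N (\<sigma> y))) = id"
    by (rule ext) (simp add: \<sigma> N additive.diff[OF \<sigma>(1)] additive.diff[OF N(1)])
qed

definition tensor :: "('a \<Rightarrow>\<^sub>0 'k::semiring_0) \<Rightarrow> ('b \<Rightarrow>\<^sub>0 'k) \<Rightarrow> ('a \<times> 'b \<Rightarrow>\<^sub>0 'k)" where
  "tensor s t = Abs_poly_mapping (\<lambda>(a, b). Poly_Mapping.lookup s a * Poly_Mapping.lookup t b)"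

lemma lookup_tensor [simp]:
  "Poly_Mapping.lookup (tensor s t) (a, b) = Poly_Mapping.lookup s a * Poly_Mapping.lookup t b"
proof -
  have "{(a, b). Poly_Mapping.lookup s a * Poly_Mapping.lookup t b \<noteq> 0}
          \<subseteq> Poly_Mapping.keys s \<times> Poly_Mapping.keys t"
    by (auto simp: in_keys_iff)
  then have "finite {(a, b). Poly_Mapping.lookup s a * Poly_Mapping.lookup t b \<noteq> 0}"
    by (rule finite_subset) simp
  then show ?thesis
    by (simp add: tensor_def case_prod_unfold)
qed

lemma tensor_add_left: "tensor (s + s') t = tensor s t + tensor s' t"
  by (rule poly_mapping_eqI) (auto simp: lookup_add distrib_right)

lemma tensor_add_right: "tensor s (t + t') = tensor s t + tensor s t'"
  by (rule poly_mapping_eqI) (auto simp: lookup_add distrib_left)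

lemma tensor_zero [simp]: "tensor 0 t = 0" "tensor s 0 = 0"
  by (rule poly_mapping_eqI, auto)+

lemma tensor_single:
  "tensor (Poly_Mapping.single a c) (Poly_Mapping.single b d) = Poly_Mapping.single (a, b) (c * d)"
  by (rule poly_mapping_eqI) (auto simp: lookup_single when_def split: if_splits)

lemma additive_tensor_right: "additive (tensor (s :: _ \<Rightarrow>\<^sub>0 'k::ring))"
  by unfold_locales (rule tensor_add_right)

definition tensor_rassoc ::
    "('a \<times> 'b \<Rightarrow>\<^sub>0 'k::semiring_0) \<Rightarrow> ('c \<Rightarrow>\<^sub>0 'k) \<Rightarrow> ('a \<times> 'b \<times> 'c \<Rightarrow>\<^sub>0 'k)" where
  "tensor_rassoc s t = Poly_Mapping.map_key (\<lambda>(a, b, c). ((a, b), c)) (tensor s t)"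

lemma lookup_tensor_rassoc [simp]:
  "Poly_Mapping.lookup (tensor_rassoc s t) (a, b, c) = Poly_Mapping.lookup s (a, b) * Poly_Mapping.lookup t c"
  by (simp add: tensor_rassoc_def map_key.rep_eq inj_def)

lemma tensor_rassoc_tensor: "tensor_rassoc (tensor r s) t = tensor r (tensor s t)"
  by (rule poly_mapping_eqI) (auto simp: mult.assoc)

lemma tensor_rassoc_add_left: "tensor_rassoc (s + s') t = tensor_rassoc s t + tensor_rassoc s' t"
  by (rule poly_mapping_eqI) (auto simp: lookup_add distrib_right)

lemma tensor_rassoc_add_right: "tensor_rassoc s (t + t') = tensor_rassoc s t + tensor_rassoc s t'"
  by (rule poly_mapping_eqI) (auto simp: lookup_add distrib_left)

lemma tensor_rassoc_single:
  "tensor_rassoc (Poly_Mapping.single (a, b) c) (Poly_Mapping.single r d)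
     = Poly_Mapping.single (a, b, r) (c * d)"
  by (rule poly_mapping_eqI) (auto simp: lookup_single when_def split: if_splits)

lemma sum_single_eq_tensor_rassoc:
  fixes s :: "'a \<times> 'b \<Rightarrow>\<^sub>0 'k::semiring_1"
  shows "(\<Sum>(p, q)\<in>Poly_Mapping.keys s. Poly_Mapping.single (p, q, r) (Poly_Mapping.lookup s (p, q)))
     = tensor_rassoc s (Poly_Mapping.single r 1)" (is "?lhs = ?rhs")
proof (rule poly_mapping_eqI)
  have pair_eq: "fst k = p \<and> snd k = q \<longleftrightarrow> k = (p, q)" for k :: "'a \<times> 'b" and p q
    by auto
  fix k :: "'a \<times> 'b \<times> 'c"
  show "Poly_Mapping.lookup ?lhs k = Poly_Mapping.lookup ?rhs k"
    by (cases k) (auto simp: lookup_sum lookup_single when_def case_prod_unfold pair_eq in_keys_iff sum.delta')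
qed

lemma sum_single_eq_tensor:
  fixes s :: "'b \<times> 'c \<Rightarrow>\<^sub>0 'k::semiring_1"
  shows "(\<Sum>(q, r)\<in>Poly_Mapping.keys s. Poly_Mapping.single (p, q, r) (Poly_Mapping.lookup s (q, r)))
     = tensor (Poly_Mapping.single p 1) s" (is "?lhs = ?rhs")
proof (rule poly_mapping_eqI)
  fix k :: "'a \<times> 'b \<times> 'c"
  show "Poly_Mapping.lookup ?lhs k = Poly_Mapping.lookup ?rhs k"
    by (cases k) (auto simp: lookup_sum lookup_single when_def case_prod_unfold in_keys_iff sum.delta')
qed

lemma additive_linear_extension:
  "additive (\<lambda>t. \<Sum>k\<in>Poly_Mapping.keys t. smult (Poly_Mapping.lookup t k) (F k))"
  by unfold_locales (intro setsum_keys_plus_distrib; simp add: smult_add_left)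

lemma tensor_f_id_altdef:
  "tensor_f_id f t = (\<Sum>k\<in>Poly_Mapping.keys t. smult (Poly_Mapping.lookup t k)
     (tensor_rassoc (f (Poly_Mapping.single (fst k, fst (snd k)) 1)) (Poly_Mapping.single (snd (snd k)) 1)))"
  unfolding tensor_f_id_def Let_def sum_single_eq_tensor_rassoc by (simp add: case_prod_unfold)

lemma tensor_id_f_altdef:
  "tensor_id_f f t = (\<Sum>k\<in>Poly_Mapping.keys t. smult (Poly_Mapping.lookup t k)
     (tensor (Poly_Mapping.single (fst k) 1) (f (Poly_Mapping.single (snd k) 1))))"
  unfolding tensor_id_f_def Let_def sum_single_eq_tensor by (simp add: case_prod_unfold)

lemma additive_tensor_f_id: "additive (tensor_f_id f)"
  unfolding tensor_f_id_altdef by (rule additive_linear_extension)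

lemma additive_tensor_id_f: "additive (tensor_id_f f)"
  unfolding tensor_id_f_altdef by (rule additive_linear_extension)

lemma tensor_f_id_add: "tensor_f_id f (X + Y) = tensor_f_id f X + tensor_f_id f Y"
  by (rule additive.add[OF additive_tensor_f_id])

lemma tensor_id_f_add: "tensor_id_f f (X + Y) = tensor_id_f f X + tensor_id_f f Y"
  by (rule additive.add[OF additive_tensor_id_f])

lemma tensor_f_id_single:
  "tensor_f_id f (Poly_Mapping.single (p, q, r) c)
     = tensor_rassoc (f (Poly_Mapping.single (p, q) 1)) (Poly_Mapping.single r c)"
  by (cases "c = 0") (auto simp: tensor_f_id_altdef intro!: poly_mapping_eqI simp: lookup_single when_def)

lemma tensor_id_f_single:
  "tensor_id_f f (Poly_Mapping.single (p, q, r) c)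
     = tensor (Poly_Mapping.single p c) (f (Poly_Mapping.single (q, r) 1))"
  by (cases "c = 0") (auto simp: tensor_id_f_altdef intro!: poly_mapping_eqI simp: lookup_single when_def)

lemma tensor_f_id_tensor_rassoc:
  fixes f :: "('v \<times> 'v \<Rightarrow>\<^sub>0 'k::field) \<Rightarrow> ('v \<times> 'v \<Rightarrow>\<^sub>0 'k)"
  assumes "klinear f"
  shows "tensor_f_id f (tensor_rassoc x y) = tensor_rassoc (f x) y"
proof (rule biadditive_poly_mapping_eqI[where g = "\<lambda>x y. tensor_f_id f (tensor_rassoc x y)"])
  fix k :: "'v \<times> 'v" and c r d
  obtain p q where k: "k = (p, q)" by fastforce
  have "f (Poly_Mapping.single k c) = smult c (f (Poly_Mapping.single k 1))"
    using klinear_single[OF assms, of k c 1] by simp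
  then show "tensor_f_id f (tensor_rassoc (Poly_Mapping.single k c) (Poly_Mapping.single r d))
      = tensor_rassoc (f (Poly_Mapping.single k c)) (Poly_Mapping.single r d)"
    by (auto simp: k tensor_rassoc_single tensor_f_id_single lookup_single when_def intro!: poly_mapping_eqI)
qed (unfold_locales; simp add: tensor_rassoc_add_left tensor_rassoc_add_right
       tensor_f_id_add additive.add[OF klinear_additive[OF assms]])+

lemma tensor_id_f_tensor:
  fixes f :: "('v \<times> 'v \<Rightarrow>\<^sub>0 'k::field) \<Rightarrow> ('v \<times> 'v \<Rightarrow>\<^sub>0 'k)"
  assumes "klinear f"
  shows "tensor_id_f f (tensor x y) = tensor x (f y)"
proof (rule biadditive_poly_mapping_eqI[where g = "\<lambda>x y. tensor_id_f f (tensor x y)"])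
  fix k :: "'v \<times> 'v" and p c d
  obtain q r where k: "k = (q, r)" by fastforce
  have "f (Poly_Mapping.single k d) = smult d (f (Poly_Mapping.single k 1))"
    using klinear_single[OF assms, of k d 1] by simp
  then show "tensor_id_f f (tensor (Poly_Mapping.single p c) (Poly_Mapping.single k d))
      = tensor (Poly_Mapping.single p c) (f (Poly_Mapping.single k d))"
    by (auto simp: k tensor_single tensor_id_f_single lookup_single when_def intro!: poly_mapping_eqI)
qed (unfold_locales; simp add: tensor_add_left tensor_add_right
       tensor_id_f_add additive.add[OF klinear_additive[OF assms]])+

lemma tensor_f_id_tensor:
  fixes f :: "('v \<times> 'v \<Rightarrow>\<^sub>0 'k::field) \<Rightarrow> ('v \<times> 'v \<Rightarrow>\<^sub>0 'k)"
  assumes "klinear f"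
  shows "tensor_f_id f (tensor A (tensor B C)) = tensor_rassoc (f (tensor A B)) C"
  using tensor_f_id_tensor_rassoc[OF assms, of "tensor A B" C] by (simp only: tensor_rassoc_tensor)

definition tensor_swap :: "('a \<times> 'a \<Rightarrow>\<^sub>0 'k::zero) \<Rightarrow> ('a \<times> 'a \<Rightarrow>\<^sub>0 'k)" where
  "tensor_swap X = Poly_Mapping.map_key prod.swap X"

lemma lookup_tensor_swap [simp]: "Poly_Mapping.lookup (tensor_swap X) (p, q) = Poly_Mapping.lookup X (q, p)"
  by (simp add: tensor_swap_def map_key.rep_eq)

lemma tensor_swap_tensor_swap [simp]: "tensor_swap (tensor_swap X) = X"
  by (rule poly_mapping_eqI) (simp add: tensor_swap_def map_key.rep_eq)

lemma tensor_swap_tensor [simp]: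
  fixes s t :: "'a \<Rightarrow>\<^sub>0 'k::comm_semiring_0"
  shows "tensor_swap (tensor s t) = tensor t s"
  by (rule poly_mapping_eqI) (auto simp: mult.commute)

lemma tensor_swap_add: "tensor_swap (X + Y) = tensor_swap X + tensor_swap Y"
  by (simp add: tensor_swap_def map_key_plus)

lemma tensor_swap_diff: "tensor_swap (X - Y) = tensor_swap X - tensor_swap Y"
  by (rule poly_mapping_eqI) (case_tac k; simp add: lookup_minus)

lemma additive_tensor_swap: "additive (tensor_swap :: _ \<Rightarrow> _ \<Rightarrow>\<^sub>0 'k::ab_group_add)"
  by unfold_locales (rule tensor_swap_add)

lemma coord_outside_supp: "i \<notin> supp u \<Longrightarrow> coord u i = 0"
  by (cases u; cases i) (auto simp: in_keys_iff)

definition lbar :: "'k::field \<times> ('b \<Rightarrow>\<^sub>0 'k) \<Rightarrow> ('b option \<Rightarrow>\<^sub>0 'k)" where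
  "lbar u = Abs_poly_mapping (coord u)"

lemma lookup_lbar [simp]: "Poly_Mapping.lookup (lbar u) = coord u"
proof -
  have "{i. coord u i \<noteq> 0} \<subseteq> supp u"
    using coord_outside_supp by blast
  then have "finite {i. coord u i \<noteq> 0}"
    by (rule finite_subset) (cases u, simp)
  then show ?thesis by (simp add: lbar_def)
qed

lemma lbar_zero [simp]: "lbar (0, 0) = 0"
  by (rule poly_mapping_eqI) (case_tac k; simp)

lemma lbar_add: "lbar (a + b, x + y) = lbar (a, x) + lbar (b, y)"
  by (rule poly_mapping_eqI) (case_tac k; simp add: lookup_add)

lemma lbar_of_components: "lbar (Poly_Mapping.lookup w None, Poly_Mapping.map_key Some w) = w"
  by (rule poly_mapping_eqI) (case_tac k; simp add: map_key.rep_eq)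

lemma sum_supp_coord_when: "(\<Sum>j\<in>supp u. coord u j when j = i) = coord u i"
  by (cases u) (auto simp: when_def sum.delta' coord_outside_supp)

lemma t4_eq_tensor:
  fixes u1 :: "'k::field \<times> ('b \<Rightarrow>\<^sub>0 'k)"
  shows "t4 u1 u2 u3 u4 = tensor (tensor (lbar u1) (lbar u2)) (tensor (lbar u3) (lbar u4))"
    (is "?lhs = ?rhs")
proof (rule poly_mapping_eqI)
  fix k :: "('b option \<times> 'b option) \<times> 'b option \<times> 'b option"
  obtain i1 i2 i3 i4 where k: "k = ((i1, i2), (i3, i4))" by (metis prod.exhaust)
  have factor: "(c1 * c2 * c3 * c4 when j1 = i1 \<and> j2 = i2 \<and> j3 = i3 \<and> j4 = i4)
      = (c1 when j1 = i1) * (c2 when j2 = i2) * (c3 when j3 = i3) * (c4 when j4 = i4)"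
    for j1 j2 j3 j4 and c1 c2 c3 c4 :: 'k
    by (simp add: when_def)
  show "Poly_Mapping.lookup ?lhs k = Poly_Mapping.lookup ?rhs k"
    by (simp add: t4_def lookup_sum lookup_single factor sum_supp_coord_when
        sum_distrib_left[symmetric] sum_distrib_right[symmetric] k)
qed

lemma single_eq_tensor_lbar:
  fixes c :: "'k::field"
  obtains u v :: "'k \<times> ('b \<Rightarrow>\<^sub>0 'k)" where "Poly_Mapping.single (i, j) c = tensor (lbar u) (lbar v)"
  by (metis that lbar_of_components tensor_single mult_1_right)

lemma single_eq_tensor4_lbar:
  fixes i1 i2 j1 j2 :: "'b option" and c :: "'k::field"
  obtains u1 u2 v1 v2 where "Poly_Mapping.single ((i1, i2), (j1, j2)) c
    = tensor (tensor (lbar u1) (lbar u2)) (tensor (lbar v1) (lbar v2))"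
proof -
  obtain u1 u2 where "Poly_Mapping.single (i1, i2) c = tensor (lbar u1) (lbar u2)"
    by (rule single_eq_tensor_lbar[of i1 i2 c])
  moreover obtain v1 v2 where "Poly_Mapping.single (j1, j2) (1 :: 'k) = tensor (lbar v1) (lbar v2)"
    by (rule single_eq_tensor_lbar[of j1 j2 1])
  ultimately show thesis
    by (metis that tensor_single mult_1_right)
qed

context
  fixes br :: "('b \<Rightarrow>\<^sub>0 'k::field) \<Rightarrow> ('b \<Rightarrow>\<^sub>0 'k) \<Rightarrow> ('b \<Rightarrow>\<^sub>0 'k) \<Rightarrow> ('b \<Rightarrow>\<^sub>0 'k)"
    and R :: "((('b option \<times> 'b option) \<times> ('b option \<times> 'b option)) \<Rightarrow>\<^sub>0 'k) \<Rightarrow>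
              ((('b option \<times> 'b option) \<times> ('b option \<times> 'b option)) \<Rightarrow>\<^sub>0 'k)"
  assumes leibniz: "leibniz3 br"
    and linear: "klinear R"
    and R_t4: "\<And>a1 x1 a2 x2 b1 y1 b2 y2.
           R (t4 (a1, x1) (a2, x2) (b1, y1) (b2, y2)) =
             t4 (b1, y1) (b2, y2) (a1, x1) (a2, x2)
           + t4 (1, 0) (1, 0) (0, br x1 y1 y2) (a2, x2)
           + t4 (1, 0) (1, 0) (a1, x1) (0, br x2 y1 y2)"
begin

lemma bracket_zero [simp]: "br 0 y z = 0" "br x 0 z = 0" "br x y 0 = 0"
  using leibniz additive.zero[OF klinear_additive]
  unfolding leibniz3_def trilinear_def by metis+

abbreviation unit_tensor :: "('b option \<times> 'b option) \<Rightarrow>\<^sub>0 'k" where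
  "unit_tensor \<equiv> tensor (lbar (1, 0)) (lbar (1, 0))"

lemma R_add: "R (X + Y) = R X + R Y"
  using linear by (simp add: klinear_def)

lemma R_diff: "R (X - Y) = R X - R Y"
  by (rule additive.diff[OF klinear_additive[OF linear]])

lemma R_tensor:
  "R (tensor (tensor (lbar u1) (lbar u2)) (tensor (lbar v1) (lbar v2))) =
     tensor (tensor (lbar v1) (lbar v2)) (tensor (lbar u1) (lbar u2))
   + tensor unit_tensor (tensor (lbar (0, br (snd u1) (snd v1) (snd v2))) (lbar u2))
   + tensor unit_tensor (tensor (lbar u1) (lbar (0, br (snd u2) (snd v1) (snd v2))))"
  using R_t4[of "fst u1" "snd u1" "fst u2" "snd u2" "fst v1" "snd v1" "fst v2" "snd v2"]
  by (simp add: t4_eq_tensor)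

lemma R_tensor_unit: "R (tensor X unit_tensor) = tensor unit_tensor X"
proof (rule additive_poly_mapping_eqI[where g = "\<lambda>X. R (tensor X unit_tensor)"])
  show "additive (\<lambda>X. R (tensor X unit_tensor))"
    by unfold_locales (simp add: tensor_add_left R_add)
  show "additive (tensor unit_tensor)"
    by (rule additive_tensor_right)
  fix k :: "'b option \<times> 'b option" and c :: 'k
  obtain u v where "Poly_Mapping.single k c = tensor (lbar u) (lbar v)"
    by (metis single_eq_tensor_lbar prod.exhaust)
  then show "R (tensor (Poly_Mapping.single k c) unit_tensor) = tensor unit_tensor (Poly_Mapping.single k c)"
    using R_tensor[of u v "(1, 0)" "(1, 0)"] by simp
qed

lemma R_swap_perturbation: "R (tensor_swap (R X - tensor_swap X)) = R X - tensor_swap X"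
proof (rule additive_poly_mapping_eqI[where g = "\<lambda>X. R (tensor_swap (R X - tensor_swap X))"])
  show "additive (\<lambda>X. R (tensor_swap (R X - tensor_swap X)))" "additive (\<lambda>X. R X - tensor_swap X)"
    by (unfold_locales; simp add: R_add R_diff tensor_swap_add tensor_swap_diff algebra_simps)+
  fix k :: "('b option \<times> 'b option) \<times> ('b option \<times> 'b option)" and c :: 'k
  obtain u1 u2 v1 v2 where k: "Poly_Mapping.single k c
      = tensor (tensor (lbar u1) (lbar u2)) (tensor (lbar v1) (lbar v2))"
    by (metis single_eq_tensor4_lbar prod.exhaust)
  show "R (tensor_swap (R (Poly_Mapping.single k c) - tensor_swap (Poly_Mapping.single k c)))
      = R (Poly_Mapping.single k c) - tensor_swap (Poly_Mapping.single k c)"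
    by (simp add: k R_tensor tensor_swap_add R_add R_tensor_unit)
qed

lemma bij_R: "bij R"
proof -
  have "bij (\<lambda>X. tensor_swap X + (R X - tensor_swap X))"
  proof (rule bij_additive_perturbation)
    show "additive (\<lambda>X. R X - tensor_swap X)"
      by unfold_locales (simp add: R_add tensor_swap_add)
  qed (simp_all add: additive_tensor_swap R_swap_perturbation)
  then show ?thesis by simp
qed

lemma braid_relation_pure_tensor:
  "tensor_f_id R (tensor_id_f R (tensor_f_id R T)) = tensor_id_f R (tensor_f_id R (tensor_id_f R T))"
  if "T = tensor (tensor (lbar u1) (lbar u2)) (tensor (tensor (lbar v1) (lbar v2)) (tensor (lbar w1) (lbar w2)))"
proof -
  have "br (br x (snd v1) (snd v2)) (snd w1) (snd w2)
      = br (br x (snd w1) (snd w2)) (snd v1) (snd v2) + br x (br (snd v1) (snd w1) (snd w2)) (snd v2)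
        + br x (snd v1) (br (snd v2) (snd w1) (snd w2))" for x
    using leibniz unfolding leibniz3_def by blast
  then show ?thesis
    unfolding that
    by (simp add: tensor_f_id_tensor[OF linear] tensor_id_f_tensor[OF linear] R_tensor R_add
        tensor_f_id_add tensor_id_f_add tensor_rassoc_add_left tensor_rassoc_tensor
        tensor_add_left tensor_add_right lbar_add[where a = 0 and b = 0, simplified] add_ac)
qed

lemma braid_relation:
  "tensor_f_id R \<circ> tensor_id_f R \<circ> tensor_f_id R = tensor_id_f R \<circ> tensor_f_id R \<circ> tensor_id_f R"
proof (rule ext, rule additive_poly_mapping_eqI[where g = "tensor_f_id R \<circ> tensor_id_f R \<circ> tensor_f_id R"])
  show "additive (tensor_f_id R \<circ> tensor_id_f R \<circ> tensor_f_id R)"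
    "additive (tensor_id_f R \<circ> tensor_f_id R \<circ> tensor_id_f R)"
    by (unfold_locales; simp add: tensor_f_id_add tensor_id_f_add)+
  fix k :: "('b option \<times> 'b option) \<times> ('b option \<times> 'b option) \<times> ('b option \<times> 'b option)"
    and c :: 'k
  obtain i1 i2 j1 j2 l1 l2 where k: "k = ((i1, i2), (j1, j2), (l1, l2))"
    by (metis prod.exhaust)
  obtain u1 u2 where "Poly_Mapping.single (i1, i2) c = tensor (lbar u1) (lbar u2)"
    by (rule single_eq_tensor_lbar[of i1 i2 c])
  moreover obtain v1 v2 w1 w2 where "Poly_Mapping.single ((j1, j2), (l1, l2)) (1 :: 'k)
      = tensor (tensor (lbar v1) (lbar v2)) (tensor (lbar w1) (lbar w2))"
    by (rule single_eq_tensor4_lbar[of j1 j2 l1 l2 1])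
  ultimately have "Poly_Mapping.single k c = tensor (tensor (lbar u1) (lbar u2))
      (tensor (tensor (lbar v1) (lbar v2)) (tensor (lbar w1) (lbar w2)))"
    by (metis k tensor_single mult_1_right)
  then show "(tensor_f_id R \<circ> tensor_id_f R \<circ> tensor_f_id R) (Poly_Mapping.single k c)
      = (tensor_id_f R \<circ> tensor_f_id R \<circ> tensor_id_f R) (Poly_Mapping.single k c)"
    unfolding comp_apply by (rule braid_relation_pure_tensor)
qed

end

theorem proposition4p5:
  fixes br :: "('b \<Rightarrow>\<^sub>0 'k::field) \<Rightarrow> ('b \<Rightarrow>\<^sub>0 'k) \<Rightarrow> ('b \<Rightarrow>\<^sub>0 'k) \<Rightarrow> ('b \<Rightarrow>\<^sub>0 'k)"
    and R :: "((('b option \<times> 'b option) \<times> ('b option \<times> 'b option)) \<Rightarrow>\<^sub>0 'k) \<Rightarrow>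
              ((('b option \<times> 'b option) \<times> ('b option \<times> 'b option)) \<Rightarrow>\<^sub>0 'k)"
  assumes "leibniz3 br"
    and "klinear R"
    and "\<And>a1 x1 a2 x2 b1 y1 b2 y2.
           R (t4 (a1, x1) (a2, x2) (b1, y1) (b2, y2)) =
             t4 (b1, y1) (b2, y2) (a1, x1) (a2, x2)
           + t4 (1, 0) (1, 0) (0, br x1 y1 y2) (a2, x2)
           + t4 (1, 0) (1, 0) (a1, x1) (0, br x2 y1 y2)"
  shows "yang_baxter R"
  unfolding yang_baxter_def
  using \<open>klinear R\<close> bij_R[OF assms] braid_relation[OF assms] by blast

end
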